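(* Let $S$ be a periodic semigroup. Then $S$ is DSC if and only if $S$ is a group.
   Context: $S$ is periodic if for every $s\in S$ there are distinct $m,n\in\mathbb{N}$ with $s^m=s^n$. A diagonal subsemigroup of $S\times S$ is a subsemigroup containing $\{(s,s)\colon s\in S\}$; a congruence is a symmetric and transitive diagonal subsemigroup; $S$ is DSC if every diagonal subsemigroup of $S\times S$ is a congruence on $S$. *)

theory Defs
  imports Main
begin

text \<open>Semigroups are modelled as types of class semigroup_mult (the carrier is the
whole, nonempty, type). Positive powers: spow s n denotes s to the power n+1.\<close>

primrec spow :: "'a::semigroup_mult \<Rightarrow> nat \<Rightarrow> 'a" where
  "spow s 0 = s"
| "spow s (Suc n) = spow s n * s"

definition periodic_sg :: "'a::semigroup_mult itself \<Rightarrow> bool" where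
  "periodic_sg _ \<longleftrightarrow> (\<forall>s::'a. \<exists>m n. m \<noteq> n \<and> spow s m = spow s n)"

definition diagonal_subsemigroup :: "('a::semigroup_mult \<times> 'a) set \<Rightarrow> bool" where
  "diagonal_subsemigroup D \<longleftrightarrow>
     (\<forall>a b c d. (a, b) \<in> D \<longrightarrow> (c, d) \<in> D \<longrightarrow> (a * c, b * d) \<in> D)
     \<and> Id \<subseteq> D"

definition congruence_sg :: "('a::semigroup_mult \<times> 'a) set \<Rightarrow> bool" where
  "congruence_sg D \<longleftrightarrow> diagonal_subsemigroup D \<and> sym D \<and> trans D"

definition DSC :: "'a::semigroup_mult itself \<Rightarrow> bool" where
  "DSC _ \<longleftrightarrow> (\<forall>D :: ('a \<times> 'a) set. diagonal_subsemigroup D \<longrightarrow> congruence_sg D)"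

definition is_group :: "'a::semigroup_mult itself \<Rightarrow> bool" where
  "is_group _ \<longleftrightarrow> (\<exists>e::'a. (\<forall>x. e * x = x \<and> x * e = x) \<and>
                              (\<forall>x. \<exists>y. x * y = e \<and> y * x = e))"

end

theory Submission
  imports Defs
begin

text \<open>In a periodic group, a diagonal subsemigroup D is transitive because
(a, b), (b^-1, b^-1), (b, c) \<in> D multiply to (a, c); it is symmetric because (a, b) \<in> D gives
(a b^-1, 1) \<in> D, hence all (a b^-1)^n are D-related to 1, and one of these powers is
b a^-1, which multiplied with (a, a) yields (b, a).

Conversely, in a periodic DSC semigroup S, symmetry of Id \<union> (S a S \<times> S) shows that S is simple.
Writing p = u p r v and passing to an idempotent power of r v gives p \<in> p r S; therefore
{(p, q). q \<in> p S \<or> q \<in> a S} is a diagonal subsemigroup, and its symmetry makes S right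
simple. An idempotent e is then a left identity, symmetry of {(p, q). q = p \<or> q = p e} makes
it a right identity, and right simplicity supplies inverses.\<close>

lemma spow_add: "spow s a * spow s b = spow s (a + b + 1)"
  by (induction b) (simp_all add: mult.assoc[symmetric])

lemma spow_Suc_left: "spow s (Suc n) = s * spow s n"
  using spow_add[of s 0 n] by simp

lemma spow_idem:
  assumes "e * e = e"
  shows "spow e n = e"
  using assms by (induction n) simp_all

lemma spow_period:
  assumes "spow s m = spow s (m + d)"
  shows "spow s (m + j + t * d) = spow s (m + j)"
proof -
  have step: "spow s (m + i + d) = spow s (m + i)" for i
  proof (cases i)
    case (Suc j')
    have "spow s (m + i + d) = spow s (m + d + j' + 1)"
      using Suc by (intro arg_cong[where f = "spow s"]) simp
    also have "\<dots> = spow s m * spow s j'" by (simp only: spow_add assms)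
    also have "\<dots> = spow s (m + i)"
      unfolding spow_add using Suc by (intro arg_cong[where f = "spow s"]) simp
    finally show ?thesis .
  qed (use assms in simp)
  show ?thesis
  proof (induction t)
    case (Suc t)
    have "spow s (m + j + Suc t * d) = spow s (m + (j + t * d) + d)" by (simp add: algebra_simps)
    also have "\<dots> = spow s (m + j)" using step[of "j + t * d"] Suc.IH by (simp add: add.assoc)
    finally show ?case .
  qed simp
qed

lemma periodic_idempotent_power:
  assumes "periodic_sg TYPE('a::semigroup_mult)"
  shows "\<exists>k. spow (s::'a) k * spow s k = spow s k"
proof -
  obtain m n where "m < n" and mn: "spow s m = spow s n"
    using assms unfolding periodic_sg_def by (metis nat_neq_iff)
  define d where "d = n - m"
  have md: "spow s m = spow s (m + d)" using mn \<open>m < n\<close> by (simp add: d_def)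
  define k where "k = (m + 1) * d - 1"
  have "(m + 1) * 1 \<le> (m + 1) * d" using \<open>m < n\<close> by (intro mult_le_mono2) (simp add: d_def)
  then have k_double: "k + k + 1 = m + (k - m) + (m + 1) * d" and k_split: "m + (k - m) = k"
    unfolding k_def by simp_all
  have "spow s k * spow s k = spow s (m + (k - m) + (m + 1) * d)"
    by (simp only: spow_add k_double)
  also have "\<dots> = spow s (m + (k - m))" by (rule spow_period[OF md])
  also have "\<dots> = spow s k" by (simp only: k_split)
  finally show ?thesis ..
qed

lemma diagonal_subsemigroup_spow:
  assumes "diagonal_subsemigroup D" "(a, b) \<in> D"
  shows "(spow a n, spow b n) \<in> D"
  using assms by (induction n) (auto simp: diagonal_subsemigroup_def)

lemma DSC_symD:
  assumes "DSC TYPE('a::semigroup_mult)" "diagonal_subsemigroup D" "((a::'a), b) \<in> D"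
  shows "(b, a) \<in> D"
  using assms unfolding DSC_def congruence_sg_def by (meson symD)

locale semigroup_group =
  fixes e :: "'a::semigroup_mult"
  assumes left_unit: "e * x = x"
    and right_unit: "x * e = x"
    and inverse: "\<exists>y. x * y = e \<and> y * x = e"
begin

lemma idempotent_eq_unit:
  assumes "f * f = f"
  shows "f = e"
proof -
  obtain g where g: "g * f = e" using inverse by blast
  have "f = g * f * f" by (simp add: g left_unit)
  also have "\<dots> = g * f" by (simp add: mult.assoc assms)
  also have "\<dots> = e" by (rule g)
  finally show ?thesis .
qed

lemma diagonal_subsemigroup_trans:
  assumes D: "diagonal_subsemigroup (D :: ('a \<times> 'a) set)"
  shows "trans D"
proof (rule transI)
  fix a b c :: 'a
  assume "(a, b) \<in> D" "(b, c) \<in> D"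
  obtain b' where b': "b * b' = e" "b' * b = e" using inverse by blast
  have "(a * b' * b, b * b' * c) \<in> D"
    using D \<open>(a, b) \<in> D\<close> \<open>(b, c) \<in> D\<close> unfolding diagonal_subsemigroup_def by blast
  then show "(a, c) \<in> D" by (simp add: mult.assoc b' left_unit right_unit)
qed

lemma diagonal_subsemigroup_sym:
  assumes periodic: "periodic_sg TYPE('a)" and D: "diagonal_subsemigroup (D :: ('a \<times> 'a) set)"
  shows "sym D"
proof (rule symI)
  fix a b :: 'a
  assume ab: "(a, b) \<in> D"
  obtain b' where b': "b * b' = e" "b' * b = e" using inverse by blast
  define c where "c = a * b'"
  have "(c, e) \<in> D"
    using D ab unfolding diagonal_subsemigroup_def c_def by (metis IdI b'(1) subsetD)
  obtain k where k: "spow c k * spow c k = spow c k"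
    using periodic_idempotent_power[OF periodic] by blast
  define c' where "c' = spow c (k + k)"
  have "c' * c = spow c k * spow c k" by (simp add: c'_def spow_add)
  then have c'_inverse: "c' * c = e" using idempotent_eq_unit[OF k] k by simp
  have "(c', e) \<in> D"
    using diagonal_subsemigroup_spow[OF D \<open>(c, e) \<in> D\<close>] spow_idem[OF left_unit]
    unfolding c'_def by simp
  then have "(c' * a, e * a) \<in> D" using D unfolding diagonal_subsemigroup_def by blast
  moreover have "c' * a = b"
  proof -
    have "c' * a = c' * c * b" by (simp add: c_def mult.assoc b' right_unit)
    then show ?thesis by (simp add: c'_inverse left_unit)
  qed
  ultimately show "(b, a) \<in> D" by (simp add: left_unit)
qed

lemma DSC:
  assumes "periodic_sg TYPE('a)"
  shows "DSC TYPE('a)"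
  unfolding DSC_def congruence_sg_def
  using diagonal_subsemigroup_trans diagonal_subsemigroup_sym[OF assms] by blast

end

lemma is_group_semigroup_group:
  assumes "is_group TYPE('a::semigroup_mult)"
  obtains e where "semigroup_group (e::'a)"
  using assms unfolding is_group_def semigroup_group_def by blast

lemma DSC_simple:
  assumes "DSC TYPE('a::semigroup_mult)"
  shows "\<exists>u v. (z::'a) = u * a * v"
proof -
  define I where "I = {u * a * v | u v. True}"
  have ideal: "p * x \<in> I \<and> x * p \<in> I" if "x \<in> I" for x p
  proof -
    obtain u v where "x = u * a * v" using \<open>x \<in> I\<close> unfolding I_def by blast
    then have "p * x = (p * u) * a * v" and "x * p = u * a * (v * p)" by (simp_all add: mult.assoc)
    then show ?thesis unfolding I_def by blast
  qed
  have "diagonal_subsemigroup (Id \<union> I \<times> UNIV)"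
    unfolding diagonal_subsemigroup_def using ideal by auto
  moreover have "(a * a * a, z) \<in> Id \<union> I \<times> UNIV" by (auto simp: I_def)
  ultimately have "(z, a * a * a) \<in> Id \<union> I \<times> UNIV" by (rule DSC_symD[OF assms])
  then show ?thesis by (auto simp: I_def)
qed

lemma spow_both_sides:
  assumes "x = u * x * w"
  shows "x = spow u n * x * spow w n"
proof (induction n)
  case (Suc n)
  have "x = u * (spow u n * x * spow w n) * w" using assms Suc.IH by simp
  also have "\<dots> = spow u (Suc n) * x * spow w (Suc n)"
    by (simp only: spow_Suc_left[of u n] spow.simps(2)[of w n] mult.assoc)
  finally show ?case .
qed (use assms in simp)

lemma simple_periodic_mem_mult_right_ideal:
  assumes periodic: "periodic_sg TYPE('a::semigroup_mult)"
    and simple: "\<And>z a :: 'a. \<exists>u v. z = u * a * v"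
  shows "\<exists>t. (p::'a) = p * r * t"
proof -
  obtain u v where "p = u * (p * r) * v" using simple by blast
  then have uw: "p = u * p * (r * v)" by (simp add: mult.assoc)
  define w where "w = r * v"
  obtain k where k: "spow w k * spow w k = spow w k"
    using periodic_idempotent_power[OF periodic] by blast
  have "p = spow u k * p * spow w k" using spow_both_sides[OF uw[folded w_def]] .
  then have "p * spow w k = p" by (metis k mult.assoc)
  moreover have "spow w k = w * spow w (k + k)"
    using k by (metis spow_add Suc_eq_plus1 spow_Suc_left)
  ultimately have "p = p * r * (v * spow w (k + k))" by (simp add: w_def mult.assoc)
  then show ?thesis ..
qed

lemma DSC_right_simple:
  assumes DSC: "DSC TYPE('a::semigroup_mult)"
    and absorb: "\<And>p r :: 'a. \<exists>t. p = p * r * t"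
  shows "\<exists>t. (b::'a) = a * t"
proof -
  have refl: "\<exists>t. p = p * t" for p :: 'a using absorb[of p p] by (metis mult.assoc)
  have below: "\<exists>t. q = p * r * t" if "q = p * t" for p q r t :: 'a
    using absorb[of p r] that by (metis mult.assoc)
  define D where "D = {(p, q). (\<exists>t. q = p * t) \<or> (\<exists>t. q = a * t)}"
  have "diagonal_subsemigroup D"
    unfolding diagonal_subsemigroup_def D_def using refl below by (auto simp: mult.assoc)
  moreover have "(b, a) \<in> D" using refl unfolding D_def by blast
  ultimately have "(a, b) \<in> D" by (rule DSC_symD[OF DSC])
  then show ?thesis unfolding D_def by blast
qed

lemma DSC_left_unit_right_unit:
  assumes DSC: "DSC TYPE('a::semigroup_mult)" and left_unit: "\<And>x. e * x = x"
  shows "(x::'a) * e = x"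
proof -
  define D where "D = {(p, q). q = p \<or> q = p * e}"
  have "diagonal_subsemigroup D"
    unfolding diagonal_subsemigroup_def D_def by (auto simp: mult.assoc left_unit)
  moreover have "(x, x * e) \<in> D" unfolding D_def by blast
  ultimately have "(x * e, x) \<in> D" by (rule DSC_symD[OF DSC])
  then show ?thesis unfolding D_def by (auto simp: mult.assoc left_unit)
qed

lemma DSC_periodic_is_group:
  assumes DSC: "DSC TYPE('a::semigroup_mult)" and periodic: "periodic_sg TYPE('a)"
  shows "is_group TYPE('a)"
proof -
  have right_simple: "\<exists>t. b = a * t" for a b :: 'a
    using DSC_right_simple[OF DSC
        simple_periodic_mem_mult_right_ideal[OF periodic DSC_simple[OF DSC]]] .
  obtain e :: 'a where idem: "e * e = e"
    using periodic_idempotent_power[OF periodic] by blast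
  have left_unit: "e * x = x" for x
    using right_simple[of x e] idem by (metis mult.assoc)
  have right_unit: "x * e = x" for x by (rule DSC_left_unit_right_unit[OF DSC left_unit])
  have "\<exists>y. x * y = e \<and> y * x = e" for x
  proof -
    obtain y where y: "e = x * y" using right_simple by blast
    obtain z where z: "e = y * z" using right_simple by blast
    have "y * x = y * (x * y) * z" by (simp add: mult.assoc z[symmetric] right_unit)
    also have "\<dots> = y * z" by (simp only: y[symmetric] right_unit)
    also have "\<dots> = e" by (rule z[symmetric])
    finally show ?thesis using y by auto
  qed
  then show ?thesis unfolding is_group_def using left_unit right_unit by blast
qed

theorem mainTheorem6:
  assumes "periodic_sg TYPE('a::semigroup_mult)"
  shows "DSC TYPE('a) \<longleftrightarrow> is_group TYPE('a)"
proof
  assume "DSC TYPE('a)"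
  then show "is_group TYPE('a)" using assms by (rule DSC_periodic_is_group)
next
  assume "is_group TYPE('a)"
  then obtain e :: 'a where "semigroup_group e" by (rule is_group_semigroup_group)
  then show "DSC TYPE('a)" using assms by (rule semigroup_group.DSC)
qed

end
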